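(* Let $x\in\Sigma^*$ and let $A$ be a weighted automaton over the tropical semiring. Then the edit-distance $d(x,A)$ can be computed in time $O(|x|\,|A|\log|A|_Q)$ and space $O(|x|+|A|)$ by running the generic shortest-distance algorithm on $U=X\circ T\circ A$ with the queue discipline $\prec_l$ derived from the shortest-first queue discipline $\prec$ (the discipline of Dijkstra's algorithm, extracting a state with smallest current tentative distance).
   Context: $\Sigma$ is a finite alphabet, $\Omega=(\Sigma\cup\{\epsilon\})^2\setminus\{(\epsilon,\epsilon)\}$, $c:\Omega\to\mathbb{R}_+$ an edit cost; alignments of $u,v$ are $\omega=\omega_1\cdots\omega_m\in\Omega^*$ whose concatenated first (second) components give $u$ ($v$), cost $c(\omega)=\sum c(\omega_i)$, and $d(u,v)$ is the minimal alignment cost. A weighted automaton $A=(\Sigma,Q,I,F,E,\lambda,\rho)$ over the tropical semiring $(\mathbb{R}_+\cup\{\infty\},\min,+,\infty,0)$ has transitions $(q,a,w,q')\in Q\times\Sigma\times(\mathbb{R}_+\cup\{\infty\})\times Q$, initial weights $\lambda$ on $I$, final weights $\rho$ on $F$; $A(y)$ is the minimum of $\lambda(\text{origin})+\text{sum of weights}+\rho(\text{destination})$ over accepting paths labeled $y$; $d(x,A)=\min_y(A(y)+d(x,y))$. $|A|_Q=|Q|$, $|A|=|Q|+|E|$. For $x=x_1\cdots x_n$, $U=X\circ T\circ A$ is the weighted graph with states $(i,j)$, $0\le i\le n$, $j\in Q$, transitions: $(i-1,j)\to(i,j')$ of weight $c(x_i,a)+w$ for each $(j,a,w,j')\in E$;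 $(i-1,j)\to(i,j)$ of weight $c(x_i,\epsilon)$; $(i,j)\to(i,j')$ of weight $c(\epsilon,a)+w$ for each $(j,a,w,j')\in E$; initial states $(0,j)$, $j\in I$, weight $\lambda(j)$; final states $(n,j)$, $j\in F$, weight $\rho(j)$. The level of $(i,j)$ is $i$. The generic shortest-distance algorithm keeps tentative distances $d[q]$ (initial weight for initial states, $\infty$ otherwise) and a queue $S$ (initially the initial states); while $S\neq\emptyset$ it extracts a state $q$ according to the queue discipline, and for each transition $e$ out of $q$, if $d[q]+w[e]<d[n[e]]$ it sets $d[n[e]]:=d[q]+w[e]$ and inserts $n[e]$ into $S$ if absent. For a queue discipline $\prec$, $q\prec_l q'$ iff $\mathrm{level}(q)<\mathrm{level}(q')$, or the levels are equal and $q\prec q'$. *)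

theory Defs
  imports Complex_Main "HOL-Library.Extended_Nonnegative_Real"
begin

text \<open>Edit operations: pairs over Sigma plus epsilon, epsilon encoded as None.
  Weights live in the tropical semiring R+ \<union> {\<infinity>}, represented by ennreal.\<close>

type_synonym 'a edit = "'a option \<times> 'a option"

definition Omega :: "'a edit set" where
  "Omega = {p. p \<noteq> (None, None)}"

definition opt_list :: "'a option \<Rightarrow> 'a list" where
  "opt_list o' = (case o' of None \<Rightarrow> [] | Some a \<Rightarrow> [a])"

definition align_left :: "'a edit list \<Rightarrow> 'a list" where
  "align_left \<omega> = concat (map (\<lambda>p. opt_list (fst p)) \<omega>)"

definition align_right :: "'a edit list \<Rightarrow> 'a list" where
  "align_right \<omega> = concat (map (\<lambda>p. opt_list (snd p)) \<omega>)"

definition alignments :: "'a list \<Rightarrow> 'a list \<Rightarrow> 'a edit list set" where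
  "alignments u v = {\<omega>. set \<omega> \<subseteq> Omega \<and> align_left \<omega> = u \<and> align_right \<omega> = v}"

definition align_cost :: "('a edit \<Rightarrow> ennreal) \<Rightarrow> 'a edit list \<Rightarrow> ennreal" where
  "align_cost c \<omega> = sum_list (map c \<omega>)"

definition edit_dist :: "('a edit \<Rightarrow> ennreal) \<Rightarrow> 'a list \<Rightarrow> 'a list \<Rightarrow> ennreal" where
  "edit_dist c u v = (INF \<omega>\<in>alignments u v. align_cost c \<omega>)"

record 'a wfa =
  states :: "nat set"
  init   :: "nat set"
  final  :: "nat set"
  trans  :: "(nat \<times> 'a \<times> ennreal \<times> nat) set"
  iw     :: "nat \<Rightarrow> ennreal"
  fw     :: "nat \<Rightarrow> ennreal"

definition wf_wfa :: "'a wfa \<Rightarrow> bool" where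
  "wf_wfa A \<longleftrightarrow> finite (states A) \<and> init A \<subseteq> states A \<and> final A \<subseteq> states A
     \<and> finite (trans A)
     \<and> (\<forall>(p, a, w, q) \<in> trans A. p \<in> states A \<and> q \<in> states A)"

fun is_path :: "'a wfa \<Rightarrow> nat \<Rightarrow> (nat \<times> 'a \<times> ennreal \<times> nat) list \<Rightarrow> nat \<Rightarrow> bool" where
  "is_path A p [] q \<longleftrightarrow> p = q"
| "is_path A p (e # es) q \<longleftrightarrow> e \<in> trans A \<and> fst e = p \<and> is_path A (snd (snd (snd e))) es q"

definition path_label :: "(nat \<times> 'a \<times> ennreal \<times> nat) list \<Rightarrow> 'a list" where
  "path_label es = map (\<lambda>e. fst (snd e)) es"

definition path_weight :: "(nat \<times> 'a \<times> ennreal \<times> nat) list \<Rightarrow> ennreal" where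
  "path_weight es = sum_list (map (\<lambda>e. fst (snd (snd e))) es)"

definition wfa_weight :: "'a wfa \<Rightarrow> 'a list \<Rightarrow> ennreal" where
  "wfa_weight A y = (INF (p, es, q) \<in> {(p, es, q). p \<in> init A \<and> q \<in> final A
        \<and> is_path A p es q \<and> path_label es = y}.
      iw A p + path_weight es + fw A q)"

definition dist_to_wfa :: "('a edit \<Rightarrow> ennreal) \<Rightarrow> 'a list \<Rightarrow> 'a wfa \<Rightarrow> ennreal" where
  "dist_to_wfa c x A = (INF y. wfa_weight A y + edit_dist c x y)"

definition wfa_size :: "'a wfa \<Rightarrow> nat" where
  "wfa_size A = card (states A) + card (trans A)"

text \<open>States are pairs (i, j) with level i.  The edge from level i to level i+1
  reads the symbol x_{i+1} = x ! i (0-based list indexing).\<close>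

type_synonym node = "nat \<times> nat"

definition U_edges :: "('a edit \<Rightarrow> ennreal) \<Rightarrow> 'a list \<Rightarrow> 'a wfa \<Rightarrow> (node \<times> ennreal \<times> node) set" where
  "U_edges c x A =
     {((i, j), c (Some (x ! i), Some a) + w, (Suc i, j')) | i j a w j'.
        i < length x \<and> (j, a, w, j') \<in> trans A}
   \<union> {((i, j), c (Some (x ! i), None), (Suc i, j)) | i j. i < length x \<and> j \<in> states A}
   \<union> {((i, j), c (None, Some a) + w, (i, j')) | i j a w j'.
        i \<le> length x \<and> (j, a, w, j') \<in> trans A}"

text \<open>Out-degree of a node in U, counted with multiplicity (one edge per generating
  transition / deletion), as used for the running time.\<close>
definition U_outdeg :: "'a list \<Rightarrow> 'a wfa \<Rightarrow> node \<Rightarrow> nat" where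
  "U_outdeg x A v =
     (if fst v < length x
      then 2 * card {e \<in> trans A. fst e = snd v} + (if snd v \<in> states A then 1 else 0)
      else if fst v = length x then card {e \<in> trans A. fst e = snd v} else 0)"

type_synonym conf = "(node \<Rightarrow> ennreal) \<times> node set"

definition init_conf :: "'a wfa \<Rightarrow> conf" where
  "init_conf A =
     ((\<lambda>v. if fst v = 0 \<and> snd v \<in> init A then iw A (snd v) else top),
      {(0, j) | j. j \<in> init A})"

definition sf_prec :: "(node \<Rightarrow> ennreal) \<Rightarrow> node \<Rightarrow> node \<Rightarrow> bool" where
  "sf_prec d q q' \<longleftrightarrow> d q < d q'"

definition level_prec :: "(node \<Rightarrow> node \<Rightarrow> bool) \<Rightarrow> node \<Rightarrow> node \<Rightarrow> bool" where
  "level_prec prec q q' \<longleftrightarrow> fst q < fst q' \<or> (fst q = fst q' \<and> prec q q')"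

definition step_via :: "('a edit \<Rightarrow> ennreal) \<Rightarrow> 'a list \<Rightarrow> 'a wfa \<Rightarrow> node \<Rightarrow> conf \<Rightarrow> conf \<Rightarrow> bool" where
  "step_via c x A q cf cf' \<longleftrightarrow>
     (let d = fst cf; S = snd cf;
          d' = (\<lambda>v. min (d v) (INF e \<in> {e \<in> U_edges c x A. fst e = q \<and> snd (snd e) = v}.
                                d q + fst (snd e)))
      in q \<in> S \<and> \<not> (\<exists>q' \<in> S. level_prec (sf_prec d) q' q)
         \<and> fst cf' = d' \<and> snd cf' = (S - {q}) \<union> {v. d' v < d v})"

definition is_run :: "('a edit \<Rightarrow> ennreal) \<Rightarrow> 'a list \<Rightarrow> 'a wfa \<Rightarrow> node list \<Rightarrow> conf list \<Rightarrow> bool" where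
  "is_run c x A qs cs \<longleftrightarrow> length cs = Suc (length qs) \<and> cs ! 0 = init_conf A
     \<and> (\<forall>k < length qs. step_via c x A (qs ! k) (cs ! k) (cs ! Suc k))"

text \<open>Time: with a binary heap, each extraction and each relaxation/insertion costs
  O(1 + log |S|).\<close>
definition run_time :: "'a list \<Rightarrow> 'a wfa \<Rightarrow> node list \<Rightarrow> conf list \<Rightarrow> real" where
  "run_time x A qs cs =
     (\<Sum>k < length qs. (1 + real (U_outdeg x A (qs ! k))) * (1 + log 2 (real (card (snd (cs ! k))))))"

text \<open>Space: the input x, the automaton A, and the tentative distances that are still
  live, i.e. finite distances at levels not below the current level (the least level
  present in the queue, or n when the queue is empty); lower levels can never change
  again and are discarded.\<close>
definition cur_level :: "nat \<Rightarrow> conf \<Rightarrow> nat" where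
  "cur_level n cf = (if snd cf = {} then n else Min (fst ` snd cf))"

definition conf_space :: "'a list \<Rightarrow> 'a wfa \<Rightarrow> conf \<Rightarrow> real" where
  "conf_space x A cf = real (length x + wfa_size A
      + card {v. fst cf v \<noteq> top \<and> fst v \<ge> cur_level (length x) cf})"

definition run_result :: "'a list \<Rightarrow> 'a wfa \<Rightarrow> conf \<Rightarrow> ennreal" where
  "run_result x A cf = (INF j \<in> final A. fst cf (length x, j) + fw A j)"

end

theory Submission
  imports Defs
begin

text \<open>
  Whatever the queue discipline, the generic shortest-distance algorithm keeps every tentative
  distance between the shortest distance and the initial weight, and keeps relaxed every edge
  leaving a node outside the queue; once the queue is empty the tentative distances are
  therefore the shortest distances.  Walks of U from level 0 to level n correspond to pairs
  (path of A, alignment of x with its label), so the shortest distances to final states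
  yield d(x,A).

  For the complexity, edges of U never decrease the level and raise it by at most one.
  Under the discipline \<prec>_l the queue therefore always lies in two consecutive levels and all
  finite distances lie at most one level above the queue, so the queue and the live part of
  d have at most 2|Q| entries.  Moreover within one level nodes are extracted in order of
  their final distance, exactly as in Dijkstra's algorithm, so an extracted node is never
  improved again: every node of U is extracted at most once, and the total work is
  \<Sum>(1 + outdeg v) \<cdot> O(log |Q|) = O(|x| |A| log |Q|).
\<close>

lemma INF_ennreal_add_const_set: "(INF i\<in>I. f i + c) = (INF i\<in>I. f i) + (c::ennreal)"
proof (cases "I = {}")
  case False
  then show ?thesis
    using continuous_at_Inf_mono[of "\<lambda>x. x + c" "f`I"]
      continuous_add[of "at_right (Inf (f`I))" "\<lambda>x. x" "\<lambda>x. c"]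
    by (auto simp: mono_def image_comp)
qed simp

lemma INF_ennreal_const_add_set: "(INF i\<in>I. c + f i) = (c::ennreal) + (INF i\<in>I. f i)"
  using INF_ennreal_add_const_set[of f c I] by (simp add: add.commute)

subsection \<open>Shortest distances and relaxation in weighted graphs\<close>

inductive walk :: "('v \<times> ennreal \<times> 'v) set \<Rightarrow> 'v \<Rightarrow> ennreal \<Rightarrow> 'v \<Rightarrow> bool"
  for E where
  nil: "walk E v 0 v"
| cons: "(u, w, v) \<in> E \<Longrightarrow> walk E v w' t \<Longrightarrow> walk E u (w + w') t"

lemma walk_snoc: "walk E u w v \<Longrightarrow> (v, w', t) \<in> E \<Longrightarrow> walk E u (w + w') t"
proof (induction rule: walk.induct)
  case (nil v)
  then show ?case using walk.cons[OF nil walk.nil] by simp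
next
  case (cons u w v w'' t')
  then show ?case using walk.cons[of u w v E] by (simp add: add.assoc)
qed

text \<open>Shortest distance from the source weighting \<open>s\<close>, i.e. from a virtual source joined to
  every node \<open>u\<close> by an edge of weight \<open>s u\<close>.\<close>
definition shortest_dist :: "('v \<times> ennreal \<times> 'v) set \<Rightarrow> ('v \<Rightarrow> ennreal) \<Rightarrow> 'v \<Rightarrow> ennreal" where
  "shortest_dist E s v = (INF p \<in> {(u, w). walk E u w v}. s (fst p) + snd p)"

lemma shortest_dist_le_walk: "walk E u w v \<Longrightarrow> shortest_dist E s v \<le> s u + w"
  unfolding shortest_dist_def by (rule INF_lower2[of "(u, w)"]) auto

lemma shortest_dist_edge:
  assumes "(u, w, v) \<in> E"
  shows "shortest_dist E s v \<le> shortest_dist E s u + w"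
proof -
  have "shortest_dist E s v \<le> (INF p \<in> {(u', w'). walk E u' w' u}. s (fst p) + snd p + w)"
  proof (rule INF_greatest)
    fix p assume "p \<in> {(u', w'). walk E u' w' u}"
    then have "walk E (fst p) (snd p + w) v" using walk_snoc assms by (cases p) auto
    then show "shortest_dist E s v \<le> s (fst p) + snd p + w"
      using shortest_dist_le_walk by (simp add: add.assoc)
  qed
  also have "\<dots> = shortest_dist E s u + w"
    unfolding shortest_dist_def by (rule INF_ennreal_add_const_set)
  finally show ?thesis .
qed

definition relax :: "('v \<times> ennreal \<times> 'v) set \<Rightarrow> ('v \<Rightarrow> ennreal) \<Rightarrow> 'v \<Rightarrow> 'v \<Rightarrow> ennreal" where
  "relax E d q v = min (d v) (INF e \<in> {e \<in> E. fst e = q \<and> snd (snd e) = v}. d q + fst (snd e))"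

lemma relax_le: "relax E d q v \<le> d v"
  unfolding relax_def by simp

lemma relax_edge: "(q, w, v) \<in> E \<Longrightarrow> relax E d q v \<le> d q + w"
  unfolding relax_def by (rule min.coboundedI2, rule INF_lower2[of "(q, w, v)"]) auto

lemma relax_less_imp:
  assumes "relax E d q v < d v"
  shows "relax E d q v = (INF e \<in> {e \<in> E. fst e = q \<and> snd (snd e) = v}. d q + fst (snd e))"
    and "d q \<le> relax E d q v" and "\<exists>w. (q, w, v) \<in> E"
proof -
  let ?I = "INF e \<in> {e \<in> E. fst e = q \<and> snd (snd e) = v}. d q + fst (snd e)"
  show eq: "relax E d q v = ?I"
    using assms unfolding relax_def by (auto simp: min_def split: if_splits)
  show "d q \<le> relax E d q v"
    unfolding eq by (rule INF_greatest) simp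
  have "{e \<in> E. fst e = q \<and> snd (snd e) = v} \<noteq> {}"
  proof
    assume "{e \<in> E. fst e = q \<and> snd (snd e) = v} = {}"
    then have "?I = top" by (simp only: INF_empty)
    then show False using assms eq by (metis top.extremum not_less)
  qed
  then obtain e where "e \<in> E" "fst e = q" "snd (snd e) = v" by blast
  then show "\<exists>w. (q, w, v) \<in> E" by (cases e) auto
qed

lemma relax_self: "relax E d q q = d q"
  using relax_less_imp(2)[of E d q q] relax_le[of E d q q] not_less by (blast intro: antisym)

definition relaxed_outside :: "('v \<times> ennreal \<times> 'v) set \<Rightarrow> ('v \<Rightarrow> ennreal) \<Rightarrow> 'v set \<Rightarrow> bool" where
  "relaxed_outside E d S \<longleftrightarrow> (\<forall>u w v. (u, w, v) \<in> E \<longrightarrow> u \<notin> S \<longrightarrow> d v \<le> d u + w)"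

definition sd_invariant :: "('v \<times> ennreal \<times> 'v) set \<Rightarrow> ('v \<Rightarrow> ennreal) \<Rightarrow> ('v \<Rightarrow> ennreal) \<Rightarrow> 'v set \<Rightarrow> bool" where
  "sd_invariant E s d S \<longleftrightarrow>
     (\<forall>v. shortest_dist E s v \<le> d v) \<and> (\<forall>v. d v \<le> s v) \<and> relaxed_outside E d S"

lemma sd_invariant_source:
  assumes "\<forall>u. u \<notin> S \<longrightarrow> s u = top"
  shows "sd_invariant E s s S"
  using assms shortest_dist_le_walk[OF walk.nil]
  unfolding sd_invariant_def relaxed_outside_def by auto

lemma shortest_dist_le_relax:
  assumes "\<forall>v. shortest_dist E s v \<le> d v"
  shows "shortest_dist E s v \<le> relax E d q v"
proof (cases "relax E d q v < d v")
  case True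
  have edge_bound: "shortest_dist E s v \<le> d q + w" if "(q, w, v) \<in> E" for w
    using shortest_dist_edge[OF that, of s] assms add_right_mono order_trans by blast
  show ?thesis
    unfolding relax_less_imp(1)[OF True]
  proof (rule INF_greatest)
    fix e assume "e \<in> {e \<in> E. fst e = q \<and> snd (snd e) = v}"
    then show "shortest_dist E s v \<le> d q + fst (snd e)" using edge_bound by (cases e) auto
  qed
next
  case False
  then show ?thesis using assms relax_le[of E d q v] by simp
qed

lemma sd_invariant_relax:
  assumes inv: "sd_invariant E s d S" and "q \<in> S"
  shows "sd_invariant E s (relax E d q) ((S - {q}) \<union> {v. relax E d q v < d v})"
  unfolding sd_invariant_def relaxed_outside_def
proof (intro conjI allI impI)
  fix v
  show "shortest_dist E s v \<le> relax E d q v"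
    by (rule shortest_dist_le_relax) (use inv in \<open>simp add: sd_invariant_def\<close>)
  show "relax E d q v \<le> s v"
    using inv relax_le[of E d q v] unfolding sd_invariant_def by (blast intro: order_trans)
next
  fix u w v
  assume e: "(u, w, v) \<in> E" and u: "u \<notin> (S - {q}) \<union> {v. relax E d q v < d v}"
  show "relax E d q v \<le> relax E d q u + w"
  proof (cases "u = q")
    case True
    then show ?thesis using relax_edge[OF e] relax_self by metis
  next
    case False
    then have "u \<notin> S" and du: "relax E d q u = d u"
      using u relax_le[of E d q u] by (auto simp: order.order_iff_strict)
    then have "d v \<le> d u + w"
      using inv e unfolding sd_invariant_def relaxed_outside_def by blast
    then show ?thesis using relax_le[of E d q v] du by simp
  qed
qed

lemma relaxed_walk_le:
  assumes "relaxed_outside E d {}" and "walk E u w t"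
  shows "d t \<le> d u + w"
  using assms(2)
proof (induction rule: walk.induct)
  case (cons u w v w' t)
  have "d v \<le> d u + w" using assms(1) cons.hyps(1) unfolding relaxed_outside_def by blast
  then have "d v + w' \<le> d u + (w + w')" by (metis add_right_mono add.assoc)
  then show ?case using cons.IH order_trans by blast
qed simp

lemma sd_invariant_empty_queue:
  assumes "sd_invariant E s d {}"
  shows "d v = shortest_dist E s v"
proof (rule antisym)
  show "d v \<le> shortest_dist E s v"
    unfolding shortest_dist_def
  proof (rule INF_greatest)
    fix p assume "p \<in> {(u, w). walk E u w v}"
    moreover have "relaxed_outside E d {}" using assms unfolding sd_invariant_def by blast
    ultimately have "d v \<le> d (fst p) + snd p" using relaxed_walk_le by (cases p) auto
    also have "\<dots> \<le> s (fst p) + snd p" using assms add_right_mono unfolding sd_invariant_def by blast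
    finally show "d v \<le> s (fst p) + snd p" .
  qed
  show "shortest_dist E s v \<le> d v" using assms unfolding sd_invariant_def by blast
qed


subsection \<open>Walks in U and alignments\<close>

lemma align_left_simps [simp]:
  "align_left [] = []" "align_left (p # \<omega>) = opt_list (fst p) @ align_left \<omega>"
  unfolding align_left_def by simp_all

lemma align_right_simps [simp]:
  "align_right [] = []" "align_right (p # \<omega>) = opt_list (snd p) @ align_right \<omega>"
  unfolding align_right_def by simp_all

lemma opt_list_simps [simp]: "opt_list None = []" "opt_list (Some a) = [a]"
  unfolding opt_list_def by simp_all

lemma align_cost_simps [simp]:
  "align_cost c [] = 0" "align_cost c (p # \<omega>) = c p + align_cost c \<omega>"
  unfolding align_cost_def by simp_all

lemma path_label_simps [simp]:
  "path_label [] = []" "path_label (e # es) = fst (snd e) # path_label es"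
  unfolding path_label_def by simp_all

lemma path_label_eq_Nil_iff [simp]: "path_label es = [] \<longleftrightarrow> es = []" "[] = path_label es \<longleftrightarrow> es = []"
  unfolding path_label_def by auto

lemma path_weight_simps [simp]:
  "path_weight [] = 0" "path_weight (e # es) = fst (snd (snd e)) + path_weight es"
  unfolding path_weight_def by simp_all

lemma Omega_Some [simp]: "(Some a, b) \<in> Omega" "(b, Some a) \<in> Omega"
  unfolding Omega_def by auto

lemma drop_eq_ConsD: "drop i x = a # r \<Longrightarrow> i < length x \<and> x ! i = a \<and> drop (Suc i) x = r"
  by (metis Cons_nth_drop_Suc drop_all leI list.distinct(1) list.inject)

lemma walk_U_of_alignment:
  assumes wf: "wf_wfa A"
  shows "set \<omega> \<subseteq> Omega \<Longrightarrow> align_left \<omega> = drop i x \<Longrightarrow> align_right \<omega> = path_label es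
     \<Longrightarrow> is_path A p es q \<Longrightarrow> p \<in> states A \<Longrightarrow> i \<le> length x
     \<Longrightarrow> walk (U_edges c x A) (i, p) (path_weight es + align_cost c \<omega>) (length x, q)"
proof (induction \<omega> arbitrary: i p es)
  case Nil
  then show ?case using walk.nil by auto
next
  case (Cons pr \<omega>)
  obtain a b where pr: "pr = (a, b)" by (cases pr)
  show ?case
  proof (cases a)
    case None
    then obtain b' where b: "b = Some b'" using Cons.prems(1) pr unfolding Omega_def by (cases b) auto
    obtain p0 a' w p' es' where es: "es = (p0, a', w, p') # es'"
      using Cons.prems(3) pr b by (cases es) auto
    have et: "(p, b', w, p') \<in> trans A" "a' = b'" "is_path A p' es' q" "align_right \<omega> = path_label es'"
      using Cons.prems(3,4) es pr b by auto
    have "p' \<in> states A" using wf et(1) unfolding wf_wfa_def by auto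
    then have "walk (U_edges c x A) (i, p') (path_weight es' + align_cost c \<omega>) (length x, q)"
      using Cons.IH[OF _ _ et(4) et(3)] Cons.prems(1,2,6) pr None by simp
    moreover have "((i, p), c (None, Some b') + w, (i, p')) \<in> U_edges c x A"
      unfolding U_edges_def using et(1) Cons.prems(6) by blast
    ultimately show ?thesis using walk.cons es pr b None et(2) by (fastforce simp: ac_simps)
  next
    case (Some a')
    have "a' # align_left \<omega> = drop i x" using Cons.prems(2) pr Some by simp
    then have dx: "i < length x" "x ! i = a'" "drop (Suc i) x = align_left \<omega>"
      using drop_eq_ConsD by metis+
    show ?thesis
    proof (cases b)
      case None
      have "walk (U_edges c x A) (Suc i, p) (path_weight es + align_cost c \<omega>) (length x, q)"
        using Cons.IH[OF _ dx(3)[symmetric] _ Cons.prems(4,5)] Cons.prems(1,3) dx(1) pr None by simp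
      moreover have "((i, p), c (Some (x ! i), None), (Suc i, p)) \<in> U_edges c x A"
        unfolding U_edges_def using dx(1) Cons.prems(5) by blast
      ultimately show ?thesis using walk.cons pr None Some dx(2) by (fastforce simp: ac_simps)
    next
      case (Some b')
      obtain p0 a'' w p' es' where es: "es = (p0, a'', w, p') # es'"
        using Cons.prems(3) pr Some by (cases es) auto
      have et: "(p, b', w, p') \<in> trans A" "a'' = b'" "is_path A p' es' q" "align_right \<omega> = path_label es'"
        using Cons.prems(3,4) es pr Some by auto
      have "p' \<in> states A" using wf et(1) unfolding wf_wfa_def by auto
      then have "walk (U_edges c x A) (Suc i, p') (path_weight es' + align_cost c \<omega>) (length x, q)"
        using Cons.IH[OF _ dx(3)[symmetric] et(4) et(3)] Cons.prems(1) dx(1) by simp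
      moreover have "((i, p), c (Some (x ! i), Some b') + w, (Suc i, p')) \<in> U_edges c x A"
        unfolding U_edges_def using et(1) dx(1) by blast
      ultimately show ?thesis using walk.cons es pr Some \<open>a = Some a'\<close> dx(2) et(2)
        by (fastforce simp: ac_simps)
    qed
  qed
qed

lemma alignment_of_walk_U:
  assumes "walk (U_edges c x A) u w (length x, q)" and "fst u \<le> length x"
  shows "\<exists>es \<omega>. is_path A (snd u) es q \<and> set \<omega> \<subseteq> Omega \<and> align_left \<omega> = drop (fst u) x
       \<and> align_right \<omega> = path_label es \<and> path_weight es + align_cost c \<omega> = w"
  using assms
proof (induction u w "(length x, q)" rule: walk.induct)
  case nil
  then show ?case by (intro exI[of _ "[]"]) auto
next
  case (cons u w v w')
  from cons.hyps(1) show ?case unfolding U_edges_def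
  proof (elim UnE CollectE exE conjE)
    fix i j a w0 j'
    assume e: "(u, w, v) = ((i, j), c (Some (x ! i), Some a) + w0, Suc i, j')" "i < length x"
      "(j, a, w0, j') \<in> trans A"
    then obtain es \<omega> where IH: "is_path A j' es q" "set \<omega> \<subseteq> Omega" "align_left \<omega> = drop (Suc i) x"
       "align_right \<omega> = path_label es" "path_weight es + align_cost c \<omega> = w'"
      using cons.hyps(3) by auto
    show ?thesis
      using e IH by (intro exI[of _ "(j, a, w0, j') # es"] exI[of _ "(Some (x ! i), Some a) # \<omega>"])
        (auto simp: Cons_nth_drop_Suc ac_simps)
  next
    fix i j
    assume e: "(u, w, v) = ((i, j), c (Some (x ! i), None), Suc i, j)" "i < length x"
    then obtain es \<omega> where IH: "is_path A j es q" "set \<omega> \<subseteq> Omega" "align_left \<omega> = drop (Suc i) x"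
       "align_right \<omega> = path_label es" "path_weight es + align_cost c \<omega> = w'"
      using cons.hyps(3) by auto
    show ?thesis
      using e IH by (intro exI[of _ es] exI[of _ "(Some (x ! i), None) # \<omega>"])
        (auto simp: Cons_nth_drop_Suc ac_simps)
  next
    fix i j a w0 j'
    assume e: "(u, w, v) = ((i, j), c (None, Some a) + w0, i, j')" "i \<le> length x"
      "(j, a, w0, j') \<in> trans A"
    then obtain es \<omega> where IH: "is_path A j' es q" "set \<omega> \<subseteq> Omega" "align_left \<omega> = drop i x"
       "align_right \<omega> = path_label es" "path_weight es + align_cost c \<omega> = w'"
      using cons.hyps(3) by auto
    show ?thesis
      using e IH by (intro exI[of _ "(j, a, w0, j') # es"] exI[of _ "(None, Some a) # \<omega>"])
        (auto simp: ac_simps)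
  qed
qed

subsection \<open>Shortest distances in U compute d(x,A)\<close>

abbreviation U_source :: "'a wfa \<Rightarrow> node \<Rightarrow> ennreal" where
  "U_source A \<equiv> fst (init_conf A)"

lemma U_source_eq: "U_source A v = (if fst v = 0 \<and> snd v \<in> init A then iw A (snd v) else top)"
  unfolding init_conf_def by simp

lemma shortest_dist_U_le_path_alignment:
  assumes wf: "wf_wfa A" and "p \<in> init A" and "is_path A p es q"
    and "\<omega> \<in> alignments x (path_label es)"
  shows "shortest_dist (U_edges c x A) (U_source A) (length x, q)
           \<le> iw A p + path_weight es + align_cost c \<omega>"
proof -
  have "p \<in> states A" using assms(2) wf unfolding wf_wfa_def by auto
  then have "walk (U_edges c x A) (0, p) (path_weight es + align_cost c \<omega>) (length x, q)"
    using walk_U_of_alignment[OF wf, of \<omega> 0 x es] assms(3,4) unfolding alignments_def by simp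
  then have "shortest_dist (U_edges c x A) (U_source A) (length x, q)
               \<le> U_source A (0, p) + (path_weight es + align_cost c \<omega>)"
    by (rule shortest_dist_le_walk)
  then show ?thesis using assms(2) by (simp add: U_source_eq add.assoc)
qed

lemma shortest_dist_U_le_dist_to_wfa:
  assumes wf: "wf_wfa A"
  shows "(INF j \<in> final A. shortest_dist (U_edges c x A) (U_source A) (length x, j) + fw A j)
           \<le> dist_to_wfa c x A"
  unfolding dist_to_wfa_def
proof (rule INF_greatest)
  fix y
  let ?P = "{(p, es, q). p \<in> init A \<and> q \<in> final A \<and> is_path A p es q \<and> path_label es = y}"
  let ?lhs = "INF j \<in> final A. shortest_dist (U_edges c x A) (U_source A) (length x, j) + fw A j"
  have "?lhs \<le> (case P of (p, es, q) \<Rightarrow> iw A p + path_weight es + fw A q) + edit_dist c x y"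
    if "P \<in> ?P" for P
  proof -
    obtain p es q where P: "P = (p, es, q)" "p \<in> init A" "q \<in> final A" "is_path A p es q"
        "path_label es = y"
      using \<open>P \<in> ?P\<close> by auto
    have "?lhs \<le> iw A p + path_weight es + align_cost c \<omega> + fw A q"
      if "\<omega> \<in> alignments x y" for \<omega>
      using shortest_dist_U_le_path_alignment[OF wf P(2,4)] that P(3,5)
      by (blast intro: INF_lower2 add_right_mono)
    then have "?lhs \<le> (INF \<omega> \<in> alignments x y. iw A p + path_weight es + fw A q + align_cost c \<omega>)"
      by (intro INF_greatest) (simp add: ac_simps)
    also have "\<dots> = iw A p + path_weight es + fw A q + edit_dist c x y"
      unfolding edit_dist_def by (rule INF_ennreal_const_add_set)
    finally show ?thesis using P(1) by simp
  qed
  then have "?lhs \<le> (INF P \<in> ?P. (case P of (p, es, q) \<Rightarrow> iw A p + path_weight es + fw A q)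
                                   + edit_dist c x y)"
    by (rule INF_greatest)
  also have "\<dots> = wfa_weight A y + edit_dist c x y"
    unfolding wfa_weight_def by (rule INF_ennreal_add_const_set)
  finally show "?lhs \<le> wfa_weight A y + edit_dist c x y" .
qed

lemma dist_to_wfa_le_shortest_dist_U:
  assumes "q \<in> final A"
  shows "dist_to_wfa c x A \<le> shortest_dist (U_edges c x A) (U_source A) (length x, q) + fw A q"
proof -
  have "dist_to_wfa c x A \<le> U_source A u + w + fw A q"
    if walk_u: "walk (U_edges c x A) u w (length x, q)" for u w
  proof (cases "fst u = 0 \<and> snd u \<in> init A")
    case True
    obtain es \<omega> where b: "is_path A (snd u) es q" "set \<omega> \<subseteq> Omega" "align_left \<omega> = x"
        "align_right \<omega> = path_label es" "path_weight es + align_cost c \<omega> = w"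
      using alignment_of_walk_U[OF walk_u] True by auto
    let ?y = "path_label es"
    have "dist_to_wfa c x A \<le> wfa_weight A ?y + edit_dist c x ?y"
      unfolding dist_to_wfa_def by (rule INF_lower) simp
    also have "\<dots> \<le> (iw A (snd u) + path_weight es + fw A q) + align_cost c \<omega>"
    proof (rule add_mono)
      show "wfa_weight A ?y \<le> iw A (snd u) + path_weight es + fw A q"
        unfolding wfa_weight_def
        by (rule INF_lower2[of "(snd u, es, q)"]) (use True assms b in auto)
      show "edit_dist c x ?y \<le> align_cost c \<omega>"
        unfolding edit_dist_def by (rule INF_lower) (use b in \<open>auto simp: alignments_def\<close>)
    qed
    also have "\<dots> = U_source A u + w + fw A q"
      using True b(5) by (simp add: U_source_eq ac_simps)
    finally show ?thesis .
  qed (auto simp: U_source_eq)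
  then have "dist_to_wfa c x A
      \<le> (INF p \<in> {(u, w). walk (U_edges c x A) u w (length x, q)}. U_source A (fst p) + snd p + fw A q)"
    by (intro INF_greatest) auto
  also have "\<dots> = shortest_dist (U_edges c x A) (U_source A) (length x, q) + fw A q"
    unfolding shortest_dist_def by (rule INF_ennreal_add_const_set)
  finally show ?thesis .
qed

lemma run_result_eq_dist_to_wfa:
  assumes "wf_wfa A" and "d = shortest_dist (U_edges c x A) (U_source A)"
  shows "run_result x A (d, S) = dist_to_wfa c x A"
  using shortest_dist_U_le_dist_to_wfa[OF assms(1), of c x] dist_to_wfa_le_shortest_dist_U[of _ A c x]
  unfolding run_result_def assms(2) fst_conv by (auto intro: antisym INF_greatest)

subsection \<open>Runs of the algorithm\<close>

lemma step_via_iff_relax: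
  "step_via c x A q cf cf' \<longleftrightarrow>
     q \<in> snd cf \<and> \<not> (\<exists>q' \<in> snd cf. level_prec (sf_prec (fst cf)) q' q)
     \<and> cf' = (relax (U_edges c x A) (fst cf) q,
              (snd cf - {q}) \<union> {v. relax (U_edges c x A) (fst cf) q v < fst cf v})"
  unfolding step_via_def relax_def Let_def by (auto simp: prod_eq_iff)

lemma U_edges_level:
  assumes "wf_wfa A" and "(u, w, v) \<in> U_edges c x A"
  shows "fst u \<le> fst v \<and> fst v \<le> Suc (fst u) \<and> fst v \<le> length x \<and> snd v \<in> states A"
  using assms unfolding U_edges_def wf_wfa_def by auto

lemma relax_U_decrease:
  assumes "wf_wfa A" and "relax (U_edges c x A) d q v < d v"
  shows "d q \<le> relax (U_edges c x A) d q v \<and> fst q \<le> fst v \<and> fst v \<le> Suc (fst q)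
    \<and> fst v \<le> length x \<and> snd v \<in> states A"
  using relax_less_imp(2,3)[OF assms(2)] U_edges_level[OF assms(1)] by fastforce

text \<open>The Dijkstra argument: a node that is \<open>\<preceq>\<^sub>l\<close> below the extracted node \<open>q\<close> cannot be
  improved by relaxing \<open>q\<close>, since edges never lower the level and weights are nonnegative.\<close>
lemma relax_U_unchanged:
  assumes "wf_wfa A" and "fst v \<le> fst q" and "fst v = fst q \<longrightarrow> d v \<le> d q"
  shows "relax (U_edges c x A) d q v = d v"
proof (rule ccontr)
  assume "relax (U_edges c x A) d q v \<noteq> d v"
  then have less: "relax (U_edges c x A) d q v < d v"
    using relax_le[of _ d q v] by (simp add: order.strict_iff_order)
  then have "d v \<le> relax (U_edges c x A) d q v"
    using relax_U_decrease[OF assms(1) less] assms(2,3) by (auto intro: order_trans)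
  then show False using less by simp
qed

lemma step_via_extracts_min:
  assumes "step_via c x A q (d, S) cf'"
  shows "q \<in> S" and "\<And>u. u \<in> S \<Longrightarrow> fst q \<le> fst u \<and> (fst u = fst q \<longrightarrow> d q \<le> d u)"
    and "cf' = (relax (U_edges c x A) d q, (S - {q}) \<union> {v. relax (U_edges c x A) d q v < d v})"
  using assms unfolding step_via_iff_relax level_prec_def sf_prec_def by (auto simp: not_less)

definition level_window :: "'a list \<Rightarrow> 'a wfa \<Rightarrow> conf \<Rightarrow> bool" where
  "level_window x A cf \<longleftrightarrow>
    (\<forall>v. fst cf v \<noteq> top \<longrightarrow> fst v \<le> length x \<and> snd v \<in> states A)
  \<and> (\<forall>v \<in> snd cf. fst v \<le> length x \<and> snd v \<in> states A)
  \<and> (\<exists>l. (\<forall>v \<in> snd cf. l \<le> fst v \<and> fst v \<le> Suc l) \<and> (\<forall>v. fst cf v \<noteq> top \<longrightarrow> fst v \<le> Suc l))"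

text \<open>\<open>X\<close> is the set of nodes extracted so far.\<close>
definition extracted_below :: "conf \<Rightarrow> node set \<Rightarrow> bool" where
  "extracted_below cf X \<longleftrightarrow> X \<inter> snd cf = {}
     \<and> (\<forall>v \<in> X. \<forall>u \<in> snd cf. fst v \<le> fst u \<and> (fst v = fst u \<longrightarrow> fst cf v \<le> fst cf u))"

lemma level_window_init: "wf_wfa A \<Longrightarrow> level_window x A (init_conf A)"
  unfolding level_window_def init_conf_def wf_wfa_def by (intro conjI exI[of _ 0]) auto

lemma level_window_step:
  assumes wf: "wf_wfa A" and inv: "level_window x A (d, S)"
    and step: "step_via c x A q (d, S) cf'"
  shows "level_window x A cf'"
proof -
  let ?d = "relax (U_edges c x A) d q"
  let ?S = "(S - {q}) \<union> {v. ?d v < d v}"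
  note qS = step_via_extracts_min(1)[OF step] and q_min = step_via_extracts_min(2)[OF step]
  note decrease = relax_U_decrease[OF wf, of c x d q]
  obtain l where window: "\<And>v. v \<in> S \<Longrightarrow> l \<le> fst v \<and> fst v \<le> Suc l"
      "\<And>v. d v \<noteq> top \<Longrightarrow> fst v \<le> Suc l"
    using inv unfolding level_window_def fst_conv snd_conv by blast
  have d_in_U: "\<And>v. d v \<noteq> top \<Longrightarrow> fst v \<le> length x \<and> snd v \<in> states A"
    and S_in_U: "\<And>v. v \<in> S \<Longrightarrow> fst v \<le> length x \<and> snd v \<in> states A"
    using inv unfolding level_window_def by auto
  have "fst q \<le> fst v \<and> fst v \<le> Suc (fst q) \<and> fst v \<le> length x \<and> snd v \<in> states A"
    if "v \<in> ?S" for v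
  proof (cases "?d v < d v")
    case False
    then have "v \<in> S" using that by blast
    then have "fst q \<le> fst v" "fst v \<le> Suc (fst q)"
      using q_min[of v] window(1)[of v] window(1)[OF qS] by auto
    then show ?thesis using S_in_U[OF \<open>v \<in> S\<close>] by blast
  qed (use decrease in blast)
  moreover have "fst v \<le> Suc (fst q) \<and> fst v \<le> length x \<and> snd v \<in> states A"
    if finite: "?d v \<noteq> top" for v
  proof (cases "?d v < d v")
    case False
    then have "d v \<noteq> top" using finite relax_le[of "U_edges c x A" d q v] by (simp add: not_less antisym)
    then show ?thesis using window(2) window(1)[OF qS] d_in_U by fastforce
  qed (use decrease in blast)
  ultimately show ?thesis
    unfolding level_window_def step_via_extracts_min(3)[OF step] fst_conv snd_conv by blast
qed

lemma extracted_below_step: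
  assumes wf: "wf_wfa A" and inv: "extracted_below (d, S) X"
    and step: "step_via c x A q (d, S) cf'"
  shows "extracted_below cf' (insert q X)"
proof -
  let ?d = "relax (U_edges c x A) d q"
  let ?S = "(S - {q}) \<union> {v. ?d v < d v}"
  note qS = step_via_extracts_min(1)[OF step] and q_min = step_via_extracts_min(2)[OF step]
  have "X \<inter> S = {}"
    and X_le_S: "\<And>v u. v \<in> X \<Longrightarrow> u \<in> S \<Longrightarrow> fst v \<le> fst u \<and> (fst v = fst u \<longrightarrow> d v \<le> d u)"
    using inv unfolding extracted_below_def by auto
  have vq: "fst v \<le> fst q \<and> (fst v = fst q \<longrightarrow> d v \<le> d q)" if "v \<in> insert q X" for v
    using that X_le_S[OF _ qS] by blast
  have settled: "?d v = d v" if "v \<in> insert q X" for v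
    using relax_U_unchanged[OF wf] vq[OF that] by blast
  have new_S: "(u \<in> S \<and> fst q \<le> fst u \<and> ?d u = d u) \<or> (d q \<le> ?d u \<and> fst q \<le> fst u)"
    if "u \<in> ?S" for u
  proof (cases "?d u < d u")
    case False
    then have "?d u = d u" using relax_le[of _ d q u] by (simp add: not_less antisym)
    moreover have "u \<in> S" using that False by blast
    ultimately show ?thesis using q_min by blast
  qed (use relax_U_decrease[OF wf] in blast)
  have "fst v \<le> fst u \<and> (fst v = fst u \<longrightarrow> ?d v \<le> ?d u)" if v: "v \<in> insert q X" and u: "u \<in> ?S" for v u
  proof -
    have qu: "fst q \<le> fst u" using new_S[OF u] by blast
    have "?d v \<le> ?d u" if same_level: "fst v = fst u"
    proof -
      have vq': "fst v = fst q" "d v \<le> d q" using vq[OF v] qu same_level by auto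
      consider "u \<in> S" "?d u = d u" | "d q \<le> ?d u" using new_S[OF u] by blast
      then show ?thesis
      proof cases
        case 1
        then have "d v \<le> d u" using v X_le_S[of v u] q_min[of u] same_level vq' by auto
        then show ?thesis using settled[OF v] 1(2) by simp
      next
        case 2
        then show ?thesis using settled[OF v] vq'(2) by simp
      qed
    qed
    then show ?thesis using vq[OF v] qu by simp
  qed
  moreover have "v \<notin> ?S" if "v \<in> insert q X" for v
    using settled[OF that] that \<open>X \<inter> S = {}\<close> by auto
  ultimately show ?thesis
    unfolding extracted_below_def step_via_extracts_min(3)[OF step] fst_conv snd_conv by blast
qed

lemma run_invariants:
  assumes wf: "wf_wfa A" and run: "is_run c x A qs cs" and "k \<le> length qs"
  shows "level_window x A (cs ! k) \<and> extracted_below (cs ! k) (set (take k qs))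
     \<and> sd_invariant (U_edges c x A) (U_source A) (fst (cs ! k)) (snd (cs ! k))"
  using \<open>k \<le> length qs\<close>
proof (induction k)
  case 0
  have "sd_invariant (U_edges c x A) (U_source A) (U_source A) (snd (init_conf A))"
    by (rule sd_invariant_source) (auto simp: init_conf_def)
  then show ?case
    using run level_window_init[OF wf] unfolding is_run_def extracted_below_def by simp
next
  case (Suc k)
  then have k: "k < length qs" by simp
  have step: "step_via c x A (qs ! k) (cs ! k) (cs ! Suc k)" using run k unfolding is_run_def by simp
  obtain d S where dS: "cs ! k = (d, S)" by (cases "cs ! k")
  have IH: "level_window x A (d, S)" "extracted_below (d, S) (set (take k qs))"
      "sd_invariant (U_edges c x A) (U_source A) d S"
    using Suc k dS by auto
  have "set (take (Suc k) qs) = insert (qs ! k) (set (take k qs))"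
    using k by (simp add: take_Suc_conv_app_nth)
  then show ?case
    using level_window_step[OF wf IH(1)] extracted_below_step[OF wf IH(2)]
      sd_invariant_relax[OF IH(3)] step dS
    unfolding step_via_iff_relax by auto
qed

lemma run_result_correct:
  assumes wf: "wf_wfa A" and run: "is_run c x A qs cs" and "snd (last cs) = {}"
  shows "run_result x A (last cs) = dist_to_wfa c x A"
proof -
  have len: "length cs = Suc (length qs)" using run unfolding is_run_def by simp
  then have last: "last cs = cs ! length qs" by (metis last_conv_nth list.size(3) nat.distinct(1) diff_Suc_1)
  obtain d where d: "last cs = (d, {})" using assms(3) by (cases "last cs") auto
  have "cs ! length qs = (d, {})" using last d by simp
  then have "sd_invariant (U_edges c x A) (U_source A) d {}"
    using run_invariants[OF wf run, of "length qs"] by simp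
  then have "d = shortest_dist (U_edges c x A) (U_source A)"
    by (intro ext sd_invariant_empty_queue)
  then show ?thesis using run_result_eq_dist_to_wfa[OF wf] d by simp
qed

subsection \<open>Complexity\<close>

lemma level_window_sets:
  assumes "level_window x A (d, S)"
  obtains l where "S \<subseteq> {l, Suc l} \<times> states A" "\<forall>v \<in> S. l \<le> fst v"
    "{v. d v \<noteq> top} \<subseteq> {..Suc l} \<times> states A"
proof -
  obtain l where l: "\<forall>v \<in> S. l \<le> fst v \<and> fst v \<le> Suc l" "\<forall>v. d v \<noteq> top \<longrightarrow> fst v \<le> Suc l"
    and S_in_U: "\<forall>v \<in> S. fst v \<le> length x \<and> snd v \<in> states A"
    and d_in_U: "\<forall>v. d v \<noteq> top \<longrightarrow> fst v \<le> length x \<and> snd v \<in> states A"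
    using assms unfolding level_window_def fst_conv snd_conv by blast
  have "v \<in> {l, Suc l} \<times> states A" if "v \<in> S" for v
    using l(1) S_in_U that by (cases v) (auto simp: le_Suc_eq)
  then have "S \<subseteq> {l, Suc l} \<times> states A" by blast
  moreover have "{v. d v \<noteq> top} \<subseteq> {..Suc l} \<times> states A"
    using l(2) d_in_U by (auto simp: mem_Times_iff)
  ultimately show ?thesis using that l(1) by blast
qed

lemma run_extracted_node:
  assumes wf: "wf_wfa A" and run: "is_run c x A qs cs" and k: "k < length qs"
  shows "qs ! k \<notin> set (take k qs)" "qs ! k \<in> {0..length x} \<times> states A"
    and "1 \<le> card (snd (cs ! k))" "card (snd (cs ! k)) \<le> 2 * card (states A)"
proof -
  obtain d S where dS: "cs ! k = (d, S)" by (cases "cs ! k")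
  have "qs ! k \<in> S"
    using run k dS unfolding is_run_def step_via_iff_relax by (metis snd_conv)
  have inv: "level_window x A (d, S)" "extracted_below (d, S) (set (take k qs))"
    using run_invariants[OF wf run, of k] k dS by simp_all
  then show "qs ! k \<notin> set (take k qs)" "qs ! k \<in> {0..length x} \<times> states A"
    using \<open>qs ! k \<in> S\<close> unfolding level_window_def extracted_below_def by (auto simp: mem_Times_iff)
  obtain l where l: "S \<subseteq> {l, Suc l} \<times> states A" by (rule level_window_sets[OF inv(1)])
  have fin: "finite ({l, Suc l} \<times> states A)" using wf unfolding wf_wfa_def by simp
  then have "card S \<le> 2 * card (states A)"
    using card_mono[OF fin l] wf unfolding wf_wfa_def by (simp add: card_cartesian_product)
  moreover have "1 \<le> card S"
    using \<open>qs ! k \<in> S\<close> finite_subset[OF l fin] by (auto simp: Suc_le_eq card_gt_0_iff)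
  ultimately show "1 \<le> card (snd (cs ! k))" "card (snd (cs ! k)) \<le> 2 * card (states A)"
    using dS by simp_all
qed

lemma distinct_if_nth_notin_take:
  assumes "\<And>k. k < length xs \<Longrightarrow> xs ! k \<notin> set (take k xs)"
  shows "distinct xs"
proof -
  have "distinct (take k xs)" if "k \<le> length xs" for k
    using that by (induction k) (auto simp: take_Suc_conv_app_nth assms)
  then show ?thesis by (metis order_refl take_all)
qed

lemma sum_card_edges_from_le:
  assumes "finite E"
  shows "(\<Sum>j\<in>Q. card {e \<in> E. fst e = j}) \<le> card E"
proof (cases "finite Q")
  case True
  then have "(\<Sum>j\<in>Q. card {e \<in> E. fst e = j}) = card (\<Union>j\<in>Q. {e \<in> E. fst e = j})"
    using assms by (intro card_UN_disjoint[symmetric]) auto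
  also have "\<dots> \<le> card E" using assms by (intro card_mono) auto
  finally show ?thesis .
qed simp

lemma sum_U_outdeg_le:
  assumes "wf_wfa A"
  shows "(\<Sum>v\<in>{0..length x} \<times> states A. 1 + U_outdeg x A v) \<le> 2 * Suc (length x) * wfa_size A"
proof -
  let ?deg = "\<lambda>j. card {e \<in> trans A. fst e = j}"
  have "U_outdeg x A v \<le> 1 + 2 * ?deg (snd v)" for v
    unfolding U_outdeg_def by auto
  then have "(\<Sum>v\<in>{0..length x} \<times> states A. 1 + U_outdeg x A v)
      \<le> (\<Sum>v\<in>{0..length x} \<times> states A. 2 + 2 * ?deg (snd v))"
    by (intro sum_mono) fastforce
  also have "\<dots> = (\<Sum>i\<in>{0..length x}. \<Sum>j\<in>states A. 2 + 2 * ?deg j)"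
    by (simp only: sum.cartesian_product split_def)
  also have "\<dots> = Suc (length x) * (2 * card (states A) + 2 * (\<Sum>j\<in>states A. ?deg j))"
  proof -
    have "(\<Sum>j\<in>states A. 2 + 2 * ?deg j) = 2 * card (states A) + 2 * (\<Sum>j\<in>states A. ?deg j)"
      by (subst sum.distrib) (simp add: sum_distrib_left)
    then show ?thesis by simp
  qed
  also have "\<dots> \<le> Suc (length x) * (2 * card (states A) + 2 * card (trans A))"
  proof -
    have "(\<Sum>j\<in>states A. ?deg j) \<le> card (trans A)"
      by (rule sum_card_edges_from_le) (use assms in \<open>simp add: wf_wfa_def\<close>)
    then show ?thesis by (intro mult_le_mono2 add_left_mono) simp
  qed
  also have "\<dots> = 2 * Suc (length x) * wfa_size A"
    unfolding wfa_size_def by simp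
  finally show ?thesis .
qed

lemma log_queue_bound:
  assumes "1 \<le> s" and "s \<le> 2 * m"
  shows "1 + log 2 (real s) \<le> 3 * max 1 (log 2 (real m))"
proof -
  have "log 2 (real s) \<le> log 2 (2 * real m)" using assms by simp
  also have "\<dots> = 1 + log 2 (real m)" using assms by (subst log_mult) auto
  finally show ?thesis by simp
qed

lemma run_time_bound:
  assumes wf: "wf_wfa A" and run: "is_run c x A qs cs"
  shows "run_time x A qs cs \<le> 12 * max 1 (real (length x)) * real (wfa_size A)
                                   * max 1 (log 2 (real (card (states A))))"
proof -
  let ?N = "{0..length x} \<times> states A" and ?M = "max 1 (log 2 (real (card (states A))))"
  have "distinct qs" using run_extracted_node(1)[OF wf run] by (rule distinct_if_nth_notin_take)
  have "set qs \<subseteq> ?N" using run_extracted_node(2)[OF wf run] by (metis in_set_conv_nth subsetI)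
  have "(\<Sum>k<length qs. 1 + U_outdeg x A (qs ! k)) = sum_list (map (\<lambda>v. 1 + U_outdeg x A v) qs)"
    by (simp add: sum_list_sum_nth atLeast0LessThan)
  also have "\<dots> = (\<Sum>v\<in>set qs. 1 + U_outdeg x A v)"
    using \<open>distinct qs\<close> by (rule sum_list_distinct_conv_sum_set)
  also have "\<dots> \<le> (\<Sum>v\<in>?N. 1 + U_outdeg x A v)"
    using \<open>set qs \<subseteq> ?N\<close> wf unfolding wf_wfa_def by (intro sum_mono2) auto
  also have "\<dots> \<le> 2 * Suc (length x) * wfa_size A" by (rule sum_U_outdeg_le[OF wf])
  finally have work: "(\<Sum>k<length qs. 1 + U_outdeg x A (qs ! k)) \<le> 2 * Suc (length x) * wfa_size A" .
  have "run_time x A qs cs \<le> (\<Sum>k<length qs. (1 + real (U_outdeg x A (qs ! k))) * (3 * ?M))"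
    unfolding run_time_def using run_extracted_node(3,4)[OF wf run]
    by (intro sum_mono mult_left_mono log_queue_bound) auto
  also have "\<dots> = real (\<Sum>k<length qs. 1 + U_outdeg x A (qs ! k)) * (3 * ?M)"
    by (simp add: sum_distrib_right)
  also have "\<dots> \<le> real (2 * Suc (length x) * wfa_size A) * (3 * ?M)"
    by (rule mult_right_mono[OF of_nat_mono[OF work]]) simp
  also have "\<dots> \<le> (4 * max 1 (real (length x)) * real (wfa_size A)) * (3 * ?M)"
  proof -
    have "2 * real (Suc (length x)) \<le> 4 * max 1 (real (length x))" by simp
    then have "real (2 * Suc (length x) * wfa_size A) \<le> 4 * max 1 (real (length x)) * real (wfa_size A)"
      using mult_right_mono[of _ _ "real (wfa_size A)"] by (simp only: of_nat_mult of_nat_numeral)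
    then show ?thesis by (rule mult_right_mono) simp
  qed
  finally show ?thesis by (simp add: mult_ac)
qed

lemma run_space_bound:
  assumes wf: "wf_wfa A" and run: "is_run c x A qs cs" and k: "k < length cs"
  shows "conf_space x A (cs ! k) \<le> 3 * real (length x + wfa_size A)"
proof -
  obtain d S where dS: "cs ! k = (d, S)" by (cases "cs ! k")
  have inv: "level_window x A (d, S)"
    using run_invariants[OF wf run, of k] k run dS unfolding is_run_def by simp
  obtain l where l: "S \<subseteq> {l, Suc l} \<times> states A" "\<forall>v \<in> S. l \<le> fst v"
      and finite_d: "{v. d v \<noteq> top} \<subseteq> {..Suc l} \<times> states A"
    by (rule level_window_sets[OF inv])
  have finQ: "finite (states A)" using wf unfolding wf_wfa_def by simp
  let ?F = "{v. d v \<noteq> top \<and> fst v \<ge> cur_level (length x) (d, S)}"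
  have "?F \<subseteq> {l, Suc l} \<times> states A \<or> ?F \<subseteq> {length x} \<times> states A"
  proof (cases "S = {}")
    case True
    have "v \<in> {length x} \<times> states A" if "v \<in> ?F" for v
    proof -
      have "d v \<noteq> top" "length x \<le> fst v" using that True unfolding cur_level_def by auto
      moreover have "fst v \<le> length x \<and> snd v \<in> states A"
        using inv \<open>d v \<noteq> top\<close> unfolding level_window_def fst_conv by blast
      ultimately show ?thesis by (cases v) auto
    qed
    then show ?thesis by blast
  next
    case False
    have "finite S" using finite_subset[OF l(1)] finQ by simp
    then have "l \<le> cur_level (length x) (d, S)" using False l(2) unfolding cur_level_def by simp
    then have "?F \<subseteq> {l, Suc l} \<times> states A" using finite_d by (auto simp: mem_Times_iff)
    then show ?thesis ..
  qed
  then have "card ?F \<le> 2 * card (states A)"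
    using finQ by (auto dest!: card_mono[rotated] simp: card_cartesian_product)
  then show ?thesis unfolding conf_space_def dS wfa_size_def by simp
qed

theorem corollary1:
  fixes c :: "'a::finite edit \<Rightarrow> ennreal"
  assumes "\<forall>\<omega> \<in> Omega. c \<omega> < top"
  shows "\<exists>C::real. \<forall>(x::'a list) (A::'a wfa) qs cs.
           wf_wfa A \<and> is_run c x A qs cs \<longrightarrow>
             run_time x A qs cs
               \<le> C * max 1 (real (length x)) * real (wfa_size A)
                    * max 1 (log 2 (real (card (states A))))
           \<and> (\<forall>k < length cs. conf_space x A (cs ! k) \<le> C * real (length x + wfa_size A))
           \<and> (snd (last cs) = {} \<longrightarrow> run_result x A (last cs) = dist_to_wfa c x A)"
proof (intro exI[of _ 12] allI impI conjI)
  fix x :: "'a list" and A :: "'a wfa" and qs cs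
  assume "wf_wfa A \<and> is_run c x A qs cs"
  then have wf: "wf_wfa A" and run: "is_run c x A qs cs" by simp_all
  show "run_time x A qs cs \<le> 12 * max 1 (real (length x)) * real (wfa_size A)
                                * max 1 (log 2 (real (card (states A))))"
    by (rule run_time_bound[OF wf run])
  show "conf_space x A (cs ! k) \<le> 12 * real (length x + wfa_size A)" if "k < length cs" for k
    using run_space_bound[OF wf run that] by simp
  show "snd (last cs) = {} \<Longrightarrow> run_result x A (last cs) = dist_to_wfa c x A"
    by (rule run_result_correct[OF wf run])
qed

end
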